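(* Let $n,m\in\mathbb Z$ and $k\le n+m$. Then, in $\mathbb C_w[x,x^{-1},y,y^{-1}]$, \[ \binom{n+m}{k}_w=\sum_{j=k-m}^{n}\binom{n}{j}_w\Big(x^jy^{n-j}\,\binom{m}{k-j}_w\,y^{j-n}x^{-j}\Big)\prod_{i=1}^{k-j}W(i+j,n-j), \] and this is an identity in the commutative ring $\mathbb C[(w(s,t))_{s,t\in\mathbb Z}]$ (after evaluating the conjugations).
   Context: Let $(w(s,t))_{s,t\in\mathbb Z}$ be commuting invertible variables, and $\mathbb C_w[x,x^{-1},y,y^{-1}]$ the associative unital $\mathbb C$-algebra generated by $x^{\pm1},y^{\pm1}$ and the $w(s,t)^{\pm1}$ subject to $x^{-1}x=xx^{-1}=1$, $y^{-1}y=yy^{-1}=1$, $yx=w(1,1)xy$, $x\,w(s,t)=w(s+1,t)x$, $y\,w(s,t)=w(s,t+1)y$. (Consequently $x^jy^{n-j}fy^{j-n}x^{-j}$ is $f$ with each $w(s,t)$ replaced by $w(s+j,t+n-j)$.) Sums $\sum_{j=u}^v$ with $v<u$ are interpreted by the convention $\sum_{j=l}^m A_j=A_l+\dots+A_m$ if $m>l-1$, $0$ if $m=l-1$, $-A_{l-1}-\dots-A_{m+1}$ if $m<l-1$. Product convention: $\prod_{j=l}^m A_j=A_l\cdots A_m$ if $m>l-1$, $=1$ if $m=l-1$, $=A_{l-1}^{-1}\cdots A_{m+1}^{-1}$ if $m<l-1$. $W(s,t)=\prod_{j=1}^tw(s,j)$. $\binom nk_w$ ($n,k\in\mathbb Z$)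 is the unique family with $\binom n0_w=\binom nn_w=1$ for all $n$ and $\binom{n+1}{k}_w=\binom nk_w+\binom n{k-1}_wW(k,n+1-k)$ whenever $(n+1,k)\ne(0,0)$. *)

theory Defs
  imports Complex_Main
begin

definition gsum :: "(int \<Rightarrow> 'a::ab_group_add) \<Rightarrow> int \<Rightarrow> int \<Rightarrow> 'a" where
  "gsum A l m = (if m \<ge> l - 1 then (\<Sum>j\<in>{l..m}. A j) else - (\<Sum>j\<in>{m+1..l-1}. A j))"

definition gprod :: "(int \<Rightarrow> 'a::field) \<Rightarrow> int \<Rightarrow> int \<Rightarrow> 'a" where
  "gprod A l m = (if m \<ge> l - 1 then (\<Prod>j\<in>{l..m}. A j) else inverse (\<Prod>j\<in>{m+1..l-1}. A j))"

definition WW :: "(int \<Rightarrow> int \<Rightarrow> 'a::field) \<Rightarrow> int \<Rightarrow> int \<Rightarrow> 'a" where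
  "WW w s t = gprod (\<lambda>j. w s j) 1 t"

definition is_wbinom_family :: "(int \<Rightarrow> int \<Rightarrow> 'a::field) \<Rightarrow> (int \<Rightarrow> int \<Rightarrow> 'a) \<Rightarrow> bool" where
  "is_wbinom_family w B \<longleftrightarrow>
     (\<forall>n. B n 0 = 1 \<and> B n n = 1) \<and>
     (\<forall>n k. (n + 1, k) \<noteq> (0, 0) \<longrightarrow> B (n + 1) k = B n k + B n (k - 1) * WW w k (n + 1 - k))"

definition wbinom :: "(int \<Rightarrow> int \<Rightarrow> 'a::field) \<Rightarrow> int \<Rightarrow> int \<Rightarrow> 'a" where
  "wbinom w = (THE B. is_wbinom_family w B)"

end

theory Submission
  imports Defs
begin

(* For fixed n, both sides, as functions X m k, satisfy
   X (m + 1) k = X m k + X m (k - 1) * W(k, n + m + 1 - k) for k \<le> n + m, equal 1 on the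
   diagonal k = n + m, and agree at m = 0.  For the right-hand side this follows from the
   recurrence of the conjugated coefficients and the identity
   W_j(k - j, t) * P_j(k) = P_j(k - 1) * W(k, t + n - j), where W_j is W for the conjugated
   weights and P_j(k) the product in the j-th summand; the extra summand j = k - m - 1
   contains the coefficient (m over m + 1), which vanishes unless m = -1, where it cancels
   the defect of the recurrence at (0, 0).  As all W are invertible, such a recurrence
   determines its solution both upwards and downwards in m.  Since wbinom is a definite
   description, existence and uniqueness of the family are needed as well. *)

section \<open>Sums and products with signed bounds\<close>

lemma gsum_upper_step: "gsum A l (u + 1) = gsum A l u + A (u + 1)"
proof -
  consider "u \<ge> l - 1" | "u = l - 2" | "u < l - 2" by linarith
  then show ?thesis
  proof cases
    case 1
    then have "{l..u + 1} = insert (u + 1) {l..u}" by auto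
    with 1 show ?thesis by (simp add: gsum_def add.commute)
  next
    case 2
    then have "{u + 1..l - 1} = {u + 1}" by auto
    with 2 show ?thesis by (simp add: gsum_def)
  next
    case 3
    then have "{u + 1..l - 1} = insert (u + 1) {u + 2..l - 1}" by auto
    with 3 show ?thesis by (simp add: gsum_def add.commute)
  qed
qed

lemma gsum_eq_diff: "gsum A l u = gsum A 0 u - gsum A 0 (l - 1)"
proof (induction u rule: int_induct[where k = "l - 1"])
  case base
  show ?case by (simp add: gsum_def)
next
  case (step1 i)
  then show ?case using gsum_upper_step[of A l i] gsum_upper_step[of A 0 i] by simp
next
  case (step2 i)
  then show ?case using gsum_upper_step[of A l "i - 1"] gsum_upper_step[of A 0 "i - 1"] by simp
qed

lemma gsum_lower_step: "gsum A (l - 1) u = A (l - 1) + gsum A l u"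
proof -
  have "gsum A 0 (l - 1) = gsum A 0 (l - 1 - 1) + A (l - 1)"
    using gsum_upper_step[of A 0 "l - 2"] by simp
  then show ?thesis
    by (simp only: gsum_eq_diff[of A "l - 1" u] gsum_eq_diff[of A l u]) (simp add: algebra_simps)
qed

lemma gsum_add: "gsum (\<lambda>j. A j + B j) l u = gsum A l u + gsum B l u"
  by (simp add: gsum_def sum.distrib)

lemma gsum_diff: "gsum (\<lambda>j. A j - B j) l u = gsum A l u - gsum B l u"
  by (simp add: gsum_def sum_subtractf)

lemma gsum_distrib_right: "gsum A l u * (c :: 'a :: ring) = gsum (\<lambda>j. A j * c) l u"
  by (simp add: gsum_def sum_distrib_right)

lemma gsum_single: "gsum A l l = A l"
  by (simp add: gsum_def)

lemma gprod_nonzero: "(\<And>j. A j \<noteq> 0) \<Longrightarrow> gprod A l u \<noteq> 0"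
  by (simp add: gprod_def)

lemma gprod_upper_step:
  assumes "\<And>j. A j \<noteq> 0"
  shows "gprod A l (u + 1) = gprod A l u * A (u + 1)"
proof -
  consider "u \<ge> l - 1" | "u = l - 2" | "u < l - 2" by linarith
  then show ?thesis
  proof cases
    case 1
    then have "{l..u + 1} = insert (u + 1) {l..u}" by auto
    with 1 show ?thesis by (simp add: gprod_def mult.commute)
  next
    case 2
    then have "{u + 1..l - 1} = {u + 1}" by auto
    with 2 assms show ?thesis by (simp add: gprod_def)
  next
    case 3
    then have "{u + 1..l - 1} = insert (u + 1) {u + 2..l - 1}" by auto
    with 3 assms show ?thesis by (simp add: gprod_def add.commute field_simps)
  qed
qed

lemma gprod_eq_div:
  assumes "\<And>j. A j \<noteq> 0"
  shows "gprod A l u = gprod A 0 u / gprod A 0 (l - 1)"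
proof (induction u rule: int_induct[where k = "l - 1"])
  case base
  show ?case using gprod_nonzero[of A 0 "l - 1"] assms by (simp add: gprod_def)
next
  case (step1 i)
  then show ?case using gprod_upper_step[of A l i] gprod_upper_step[of A 0 i] assms by simp
next
  case (step2 i)
  have "gprod A l (i - 1) * A i = gprod A 0 (i - 1) / gprod A 0 (l - 1) * A i"
    using step2 gprod_upper_step[of A l "i - 1"] gprod_upper_step[of A 0 "i - 1"] assms by simp
  then show ?case using assms[of i] by (metis mult_cancel_right)
qed

lemma gprod_append:
  assumes "\<And>j. A j \<noteq> 0"
  shows "gprod A a b * gprod A (b + 1) c = gprod A a c"
  using gprod_eq_div[of A a b] gprod_eq_div[of A "b + 1" c] gprod_eq_div[of A a c]
    gprod_nonzero[of A 0 b] assms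
  by simp

lemma gprod_shift: "gprod (\<lambda>i. f (i + c)) l u = gprod f (l + c) (u + c)"
proof -
  have "prod (\<lambda>i. f (i + c)) {a..b} = prod f {a + c..b + c}" for a b
    by (rule prod.reindex_bij_witness[of _ "\<lambda>i. i - c" "\<lambda>i. i + c"]) auto
  then show ?thesis by (simp add: gprod_def algebra_simps)
qed

lemma WW_nonzero: "(\<And>s t. w s t \<noteq> 0) \<Longrightarrow> WW w s t \<noteq> 0"
  unfolding WW_def by (rule gprod_nonzero)

lemma WW_0 [simp]: "WW w s 0 = 1"
  by (simp add: WW_def gprod_def)

lemma WW_shift: "WW (\<lambda>s t. w (s + a) (t + b)) s t = gprod (w (s + a)) (1 + b) (t + b)"
  unfolding WW_def using gprod_shift[of "w (s + a)" b 1 t] by simp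

lemma WW_append:
  "(\<And>s t. w s t \<noteq> 0) \<Longrightarrow> WW w s a * gprod (w s) (a + 1) b = WW w s b"
  unfolding WW_def by (rule gprod_append)

section \<open>Existence and uniqueness of the w-binomial coefficients\<close>

lemma is_wbinom_family_0: "is_wbinom_family w B \<Longrightarrow> B n 0 = 1"
  unfolding is_wbinom_family_def by auto

lemma is_wbinom_family_diag: "is_wbinom_family w B \<Longrightarrow> B n n = 1"
  unfolding is_wbinom_family_def by auto

lemma is_wbinom_family_rec:
  "is_wbinom_family w B \<Longrightarrow> (n + 1, k) \<noteq> (0, 0) \<Longrightarrow>
    B (n + 1) k = B n k + B n (k - 1) * WW w k (n + 1 - k)"
  unfolding is_wbinom_family_def by auto

(* At the excluded point the recurrence would give B 0 0 = 2; the correction makes it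
   hold everywhere. *)
lemma is_wbinom_family_rec_corrected:
  assumes "is_wbinom_family w B"
  shows "B (n + 1) k = B n k + B n (k - 1) * WW w k (n + 1 - k)
           - (if n + 1 = 0 \<and> k = 0 then 1 else 0)"
proof (cases "n + 1 = 0 \<and> k = 0")
  case True
  then have "n = -1" "k = 0" by auto
  moreover have "B (-1) 0 = 1" "B (-1) (-1) = 1" "B 0 0 = 1"
    using is_wbinom_family_0[OF assms] is_wbinom_family_diag[OF assms] by blast+
  ultimately show ?thesis by simp
next
  case False
  then show ?thesis using is_wbinom_family_rec[OF assms] by auto
qed

lemma is_wbinom_family_above_diag:
  assumes "is_wbinom_family w B"
  shows "B m (m + 1) = (if m = -1 then 1 else 0)"
proof (cases "m = -1")
  case True
  then show ?thesis using is_wbinom_family_0[OF assms] by simp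
next
  case False
  then have "B (m + 1) (m + 1) = B m (m + 1) + B m m * WW w (m + 1) 0"
    using is_wbinom_family_rec[OF assms, of m "m + 1"] by simp
  with False show ?thesis
    using is_wbinom_family_diag[OF assms, of m] is_wbinom_family_diag[OF assms, of "m + 1"] by simp
qed

lemma pascal_recurrence_zero:
  fixes D c :: "int \<Rightarrow> int \<Rightarrow> 'a :: idom"
  assumes rec: "\<And>n k. D (n + 1) k = D n k + D n (k - 1) * c n k"
    and c_nonzero: "\<And>n k. c n k \<noteq> 0"
    and col_0: "\<And>n. D n 0 = 0" and diag: "\<And>n. D n n = 0"
  shows "D n k = 0"
proof -
  have left: "D n (k - 1) = 0" if col: "\<And>n. D n k = 0" for n k
    using rec[of n k] col c_nonzero[of n k] by simp
  have right: "D n (k + 1) = 0" if col: "\<And>n. D n k = 0" for n k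
  proof (induction n rule: int_induct[where k = "k + 1"])
    case base
    show ?case by (rule diag)
  next
    case (step1 i)
    then show ?case using rec[of i "k + 1"] col by simp
  next
    case (step2 i)
    then show ?case using rec[of "i - 1" "k + 1"] col by simp
  qed
  have "\<forall>n. D n k = 0"
  proof (induction k rule: int_induct[where k = 0])
    case base
    show ?case using col_0 by simp
  next
    case (step1 i)
    then show ?case using right by blast
  next
    case (step2 i)
    then show ?case using left by blast
  qed
  then show ?thesis by blast
qed

lemma wbinom_family_unique:
  assumes nz: "\<And>s t. w s t \<noteq> 0"
    and B1: "is_wbinom_family w B1" and B2: "is_wbinom_family w B2"
  shows "B1 = B2"
proof -
  have "B1 n k - B2 n k = 0" for n k
  proof (rule pascal_recurrence_zero[where c = "\<lambda>n k. WW w k (n + 1 - k)"])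
    show "B1 (n + 1) k - B2 (n + 1) k
        = B1 n k - B2 n k + (B1 n (k - 1) - B2 n (k - 1)) * WW w k (n + 1 - k)" for n k
      unfolding is_wbinom_family_rec_corrected[OF B1, of n k]
        is_wbinom_family_rec_corrected[OF B2, of n k]
      by (simp add: algebra_simps)
  qed (simp_all add: WW_nonzero nz is_wbinom_family_0[OF B1] is_wbinom_family_0[OF B2]
      is_wbinom_family_diag[OF B1] is_wbinom_family_diag[OF B2])
  then show ?thesis by (simp add: fun_eq_iff)
qed

(* Column k = d of the family, as a function of n: summing the recurrence from the
   diagonal gives B n (d + 1) = 1 + (sum j = d + 1 .. n - 1. B j d * W(d + 1, j - d)). *)
fun wbinom_nonneg_col :: "(int \<Rightarrow> int \<Rightarrow> 'a :: field) \<Rightarrow> nat \<Rightarrow> int \<Rightarrow> 'a" where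
  "wbinom_nonneg_col w 0 n = 1"
| "wbinom_nonneg_col w (Suc d) n =
     1 + gsum (\<lambda>j. wbinom_nonneg_col w d j * WW w (int d + 1) (j - int d)) (int d + 1) (n - 1)"

(* Column k = -1 - d: the recurrence at k = 0 forces B n (-1) = [n = -1], and it can be
   solved for B n (k - 1) because the weights are invertible. *)
fun wbinom_neg_col :: "(int \<Rightarrow> int \<Rightarrow> 'a :: field) \<Rightarrow> nat \<Rightarrow> int \<Rightarrow> 'a" where
  "wbinom_neg_col w 0 n = (if n = -1 then 1 else 0)"
| "wbinom_neg_col w (Suc d) n =
     (wbinom_neg_col w d (n + 1) - wbinom_neg_col w d n) / WW w (-1 - int d) (n + 2 + int d)"

definition wbinom_explicit :: "(int \<Rightarrow> int \<Rightarrow> 'a :: field) \<Rightarrow> int \<Rightarrow> int \<Rightarrow> 'a" where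
  "wbinom_explicit w n k =
     (if 0 \<le> k then wbinom_nonneg_col w (nat k) n else wbinom_neg_col w (nat (-k - 1)) n)"

lemma wbinom_neg_col_zero: "n < -1 - int d \<or> 0 \<le> n \<Longrightarrow> wbinom_neg_col w d n = 0"
  by (induction d arbitrary: n) auto

lemma wbinom_neg_col_diag: "wbinom_neg_col w d (-1 - int d) = 1"
proof (induction d)
  case (Suc d)
  have "wbinom_neg_col w d (- int d - 2) = 0" by (rule wbinom_neg_col_zero) simp
  with Suc show ?case by (simp add: algebra_simps)
qed simp

lemma wbinom_explicit_diag: "wbinom_explicit w n n = 1"
proof (cases "0 < n")
  case True
  then have "nat n = Suc (nat (n - 1))" by simp
  with True show ?thesis by (simp add: wbinom_explicit_def gsum_def)
next
  case False
  then show ?thesis using wbinom_neg_col_diag[of w "nat (- n - 1)"]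
    by (cases "n = 0") (simp_all add: wbinom_explicit_def)
qed

lemma wbinom_explicit_rec:
  assumes nz: "\<And>s t. w s t \<noteq> 0" and "(n + 1, k) \<noteq> (0, 0)"
  shows "wbinom_explicit w (n + 1) k
    = wbinom_explicit w n k + wbinom_explicit w n (k - 1) * WW w k (n + 1 - k)"
proof -
  consider "1 \<le> k" | "k = 0" | "k < 0" by linarith
  then show ?thesis
  proof cases
    case 1
    define d where "d = nat (k - 1)"
    have k: "int d = k - 1" "nat k = Suc d" "nat (k - 1) = d" using 1 by (simp_all add: d_def)
    show ?thesis
      using gsum_upper_step[of "\<lambda>j. wbinom_nonneg_col w d j * WW w (int d + 1) (j - int d)"
          "int d + 1" "n - 1"] 1
      by (simp add: wbinom_explicit_def k diff_diff_eq2)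
  next
    case 2
    with assms(2) show ?thesis by (simp add: wbinom_explicit_def)
  next
    case 3
    define d where "d = nat (- k - 1)"
    have k: "int d = - k - 1" "nat (- k - 1) = d" "nat (- k) = Suc d" using 3 by (simp_all add: d_def)
    show ?thesis
      using WW_nonzero[of w k "n + 1 - k", OF nz] 3
      by (simp add: wbinom_explicit_def k field_simps)
  qed
qed

lemma is_wbinom_family_explicit:
  "(\<And>s t. w s t \<noteq> 0) \<Longrightarrow> is_wbinom_family w (wbinom_explicit w)"
  unfolding is_wbinom_family_def
  by (simp add: wbinom_explicit_diag wbinom_explicit_rec) (simp add: wbinom_explicit_def)

lemma wbinom_eq_explicit:
  assumes nz: "\<And>s t. w s t \<noteq> 0"
  shows "wbinom w = wbinom_explicit w"
  unfolding wbinom_def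
  using is_wbinom_family_explicit[OF nz] wbinom_family_unique[OF nz _ is_wbinom_family_explicit[OF nz]]
  by (rule the_equality)

lemma is_wbinom_family_wbinom: "(\<And>s t. w s t \<noteq> 0) \<Longrightarrow> is_wbinom_family w (wbinom w)"
  by (simp add: wbinom_eq_explicit is_wbinom_family_explicit)

lemma wbinom_negative: "(\<And>s t. w s t \<noteq> 0) \<Longrightarrow> 0 \<le> n \<Longrightarrow> k < 0 \<Longrightarrow> wbinom w n k = 0"
  by (simp add: wbinom_eq_explicit wbinom_explicit_def wbinom_neg_col_zero)

section \<open>The Vandermonde identity\<close>

lemma recurrence_zero_below_diagonal:
  fixes D c :: "int \<Rightarrow> int \<Rightarrow> 'a :: idom"
  assumes rec: "\<And>m k. k \<le> N + m \<Longrightarrow> D (m + 1) k = D m k + D m (k - 1) * c m k"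
    and c_nonzero: "\<And>m k. c m k \<noteq> 0"
    and init: "\<And>k. k \<le> N \<Longrightarrow> D 0 k = 0"
    and diag: "\<And>m. D m (N + m) = 0"
  shows "k \<le> N + m \<Longrightarrow> D m k = 0"
proof (induction m arbitrary: k rule: int_induct[where k = 0])
  case base
  then show ?case using init by simp
next
  case (step1 i)
  show ?case
  proof (cases "k = N + (i + 1)")
    case False
    with step1 show ?thesis using rec[of k i] by simp
  qed (simp add: diag)
next
  case (step2 i)
  from \<open>k \<le> N + (i - 1)\<close> show ?case
  proof (induction k rule: int_le_induct)
    case base
    show ?case by (rule diag)
  next
    case (step k)
    then have "D (i - 1) (k - 1) * c (i - 1) k = 0"
      using rec[of k "i - 1"] step2.IH[of k] by simp
    then show ?case using c_nonzero by simp
  qed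
qed

lemma WW_shift_mult_gprod:
  assumes nz: "\<And>s t. w s t \<noteq> 0"
  shows "WW (\<lambda>s t. w (s + j) (t + b)) (k - j) t * gprod (\<lambda>i. WW w (i + j) b) 1 (k - j)
       = gprod (\<lambda>i. WW w (i + j) b) 1 (k - 1 - j) * WW w k (t + b)"
proof -
  have "gprod (\<lambda>i. WW w (i + j) b) 1 (k - j) = gprod (\<lambda>i. WW w (i + j) b) 1 (k - 1 - j) * WW w k b"
    using gprod_upper_step[of "\<lambda>i. WW w (i + j) b" 1 "k - 1 - j"] WW_nonzero[OF nz] by simp
  moreover have "WW w k b * gprod (w k) (b + 1) (t + b) = WW w k (t + b)"
    by (rule WW_append[OF nz])
  ultimately show ?thesis by (simp add: WW_shift algebra_simps)
qed

definition vandermonde_term :: "(int \<Rightarrow> int \<Rightarrow> 'a :: field) \<Rightarrow> int \<Rightarrow> int \<Rightarrow> int \<Rightarrow> int \<Rightarrow> 'a" where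
  "vandermonde_term w n m k j =
     wbinom w n j * wbinom (\<lambda>s t. w (s + j) (t + (n - j))) m (k - j)
       * gprod (\<lambda>i. WW w (i + j) (n - j)) 1 (k - j)"

definition vandermonde_sum :: "(int \<Rightarrow> int \<Rightarrow> 'a :: field) \<Rightarrow> int \<Rightarrow> int \<Rightarrow> int \<Rightarrow> 'a" where
  "vandermonde_sum w n m k = gsum (vandermonde_term w n m k) (k - m) n"

lemma vandermonde_term_rec:
  assumes nz: "\<And>s t. w s t \<noteq> 0"
  shows "vandermonde_term w n (m + 1) k j
    = vandermonde_term w n m k j + vandermonde_term w n m (k - 1) j * WW w k (n + m + 1 - k)
      - (if m = -1 \<and> j = k then wbinom w n k else 0)"
proof -
  let ?w = "\<lambda>s t. w (s + j) (t + (n - j))"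
  let ?P = "\<lambda>k. gprod (\<lambda>i. WW w (i + j) (n - j)) 1 (k - j)"
  have fam: "is_wbinom_family ?w (wbinom ?w)"
    by (rule is_wbinom_family_wbinom) (simp add: nz)
  have key: "WW ?w (k - j) (m + 1 - (k - j)) * ?P k = ?P (k - 1) * WW w k (n + m + 1 - k)"
    using WW_shift_mult_gprod[of w j "n - j" k "m + 1 - (k - j)", OF nz] by (simp add: algebra_simps)
  have "vandermonde_term w n (m + 1) k j
    = wbinom w n j * wbinom ?w m (k - j) * ?P k
      + wbinom w n j * wbinom ?w m (k - j - 1) * (WW ?w (k - j) (m + 1 - (k - j)) * ?P k)
      - wbinom w n j * (if m + 1 = 0 \<and> k - j = 0 then 1 else 0) * ?P k"
    unfolding vandermonde_term_def is_wbinom_family_rec_corrected[OF fam, of m "k - j"]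
    by (simp add: algebra_simps)
  also have "\<dots> = vandermonde_term w n m k j + vandermonde_term w n m (k - 1) j * WW w k (n + m + 1 - k)
      - (if m = -1 \<and> j = k then wbinom w n k else 0)"
    unfolding key by (auto simp: vandermonde_term_def gprod_def algebra_simps)
  finally show ?thesis .
qed

lemma vandermonde_sum_rec:
  assumes nz: "\<And>s t. w s t \<noteq> 0" and "k \<le> n + m"
  shows "vandermonde_sum w n (m + 1) k
    = vandermonde_sum w n m k + vandermonde_sum w n m (k - 1) * WW w k (n + m + 1 - k)"
proof -
  let ?T = "vandermonde_term w n m"
  let ?c = "WW w k (n + m + 1 - k)"
  let ?corr = "\<lambda>j. if m = -1 \<and> j = k then wbinom w n k else 0"
  have boundary: "?T k (k - m - 1) = (if m = -1 then wbinom w n k else 0)"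
  proof -
    let ?w = "\<lambda>s t. w (s + (k - m - 1)) (t + (n - (k - m - 1)))"
    have "wbinom ?w m (m + 1) = (if m = -1 then 1 else 0)"
      by (rule is_wbinom_family_above_diag, rule is_wbinom_family_wbinom) (simp add: nz)
    then show ?thesis by (simp add: vandermonde_term_def gprod_def)
  qed
  have correction: "gsum ?corr (k - m - 1) n = (if m = -1 then wbinom w n k else 0)"
    using assms(2) by (simp add: gsum_def)
  have "vandermonde_term w n (m + 1) k = (\<lambda>j. ?T k j + ?T (k - 1) j * ?c - ?corr j)"
    using vandermonde_term_rec[OF nz] by (simp add: fun_eq_iff)
  then have "vandermonde_sum w n (m + 1) k
      = gsum (\<lambda>j. ?T k j + ?T (k - 1) j * ?c - ?corr j) (k - m - 1) n"
    by (simp add: vandermonde_sum_def diff_diff_eq)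
  also have "\<dots> = gsum (?T k) (k - m - 1) n + gsum (?T (k - 1)) (k - m - 1) n * ?c
      - gsum ?corr (k - m - 1) n"
    by (simp add: gsum_add gsum_diff gsum_distrib_right)
  also have "gsum (?T k) (k - m - 1) n = ?T k (k - m - 1) + vandermonde_sum w n m k"
    using gsum_lower_step[of "?T k" "k - m" n] by (simp add: vandermonde_sum_def)
  also have "gsum (?T (k - 1)) (k - m - 1) n = vandermonde_sum w n m (k - 1)"
    by (simp add: vandermonde_sum_def algebra_simps)
  finally show ?thesis using boundary correction by simp
qed

lemma vandermonde_sum_diag:
  assumes nz: "\<And>s t. w s t \<noteq> 0"
  shows "vandermonde_sum w n m (n + m) = 1"
proof -
  have "wbinom w n n = 1" "wbinom (\<lambda>s t. w (s + n) t) m m = 1"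
    by (rule is_wbinom_family_diag, rule is_wbinom_family_wbinom, simp add: nz)+
  then show ?thesis by (simp add: vandermonde_sum_def vandermonde_term_def gsum_single gprod_def)
qed

lemma vandermonde_sum_0:
  assumes nz: "\<And>s t. w s t \<noteq> 0" and "k \<le> n"
  shows "vandermonde_sum w n 0 k = wbinom w n k"
proof -
  have "vandermonde_term w n 0 k j = 0" if "k < j" for j
    using that wbinom_negative[of "\<lambda>s t. w (s + j) (t + (n - j))" 0 "k - j"] nz
    by (simp add: vandermonde_term_def)
  then have "gsum (vandermonde_term w n 0 k) (k + 1) n = 0"
    using assms(2) by (simp add: gsum_def)
  moreover have "vandermonde_term w n 0 k k = wbinom w n k"
    using is_wbinom_family_0[OF is_wbinom_family_wbinom, of "\<lambda>s t. w (s + k) (t + (n - k))" 0] nz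
    by (simp add: vandermonde_term_def gprod_def)
  ultimately show ?thesis
    using gsum_lower_step[of "vandermonde_term w n 0 k" "k + 1" n] by (simp add: vandermonde_sum_def)
qed

theorem corollary2:
  fixes w :: "int \<Rightarrow> int \<Rightarrow> complex" and n m k :: int
  assumes "\<And>s t. w s t \<noteq> 0"
    and "k \<le> n + m"
  shows "wbinom w (n + m) k =
    gsum (\<lambda>j. wbinom w n j * wbinom (\<lambda>s t. w (s + j) (t + (n - j))) m (k - j)
                 * gprod (\<lambda>i. WW w (i + j) (n - j)) 1 (k - j)) (k - m) n"
proof -
  note nz = assms(1)
  have fam: "is_wbinom_family w (wbinom w)" by (rule is_wbinom_family_wbinom[OF nz])
  have "wbinom w (n + m) k - vandermonde_sum w n m k = 0"
  proof (rule recurrence_zero_below_diagonal[where N = n and c = "\<lambda>m k. WW w k (n + m + 1 - k)"])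
    show "wbinom w (n + (m + 1)) k - vandermonde_sum w n (m + 1) k
        = wbinom w (n + m) k - vandermonde_sum w n m k
          + (wbinom w (n + m) (k - 1) - vandermonde_sum w n m (k - 1)) * WW w k (n + m + 1 - k)"
      if "k \<le> n + m" for m k
      using that is_wbinom_family_rec[OF fam, of "n + m" k] vandermonde_sum_rec[OF nz that]
      by (simp add: algebra_simps)
  qed (use assms in \<open>simp_all add: WW_nonzero vandermonde_sum_0 vandermonde_sum_diag
         is_wbinom_family_diag[OF fam]\<close>)
  then show ?thesis by (simp add: vandermonde_sum_def vandermonde_term_def[abs_def])
qed

end
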